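(* Let $(\mathcal{C},\mathbb{E},\mathfrak{s})$ satisfy (ET1), (ET2) and (ET3), and let $\mathbb{F}\subseteq\mathbb{E}$ be an additive subfunctor. If an $\mathbb{F}$-inflation $x:A\to B$ factors through an $\mathbb{E}$-inflation $g:A\to Y$ (i.e. $x=hg$ for some $h:Y\to B$), then $g$ is an $\mathbb{F}$-inflation.
   Context: $\mathcal{C}$ additive, $\mathbb{E}:\mathcal{C}^{\mathrm{op}}\times\mathcal{C}\to\mathrm{Ab}$ biadditive (ET1); for $\delta\in\mathbb{E}(C,A)$, $a:A\to A'$, $c:C'\to C$ put $a_\star\delta=\mathbb{E}(C,a)(\delta)$, $c^\star\delta=\mathbb{E}(c,A)(\delta)$. (ET2): $\mathfrak{s}$ is an additive realization (Nakaoka–Palu): each $\delta\in\mathbb{E}(C,A)$ is assigned an equivalence class of sequences $A\xrightarrow{x}B\xrightarrow{y}C$ (up to isomorphism of middle terms compatible with the maps), $0$ is realized by split sequences, realization respects direct sums, and if $a_\star\delta=c^\star\delta'$ there is $b$ making the realizing sequences commute. A realized pair is an $\mathbb{E}$-triangle $A\xrightarrow{x}B\xrightarrow{y}C\overset{\delta}{\dashrightarrow}$; $x$ is an $\mathbb{E}$-inflation. A triple $(a,b,c)$ of morphisms forming a commutative diagram between realizing sequences with $a_\star\delta=c^\star\delta'$ is a morphism of $\mathbb{E}$-triangles. (ET3): given $\mathbb{E}$-triangles $A\xrightarrow{x}B\to C\overset{\delta}{\dashrightarrow}$, $A'\xrightarrow{x'}B'\to C'\overset{\delta'}{\dashrightarrow}$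 and $a:A\to A'$, $b:B\to B'$ with $bx=x'a$, there is $c:C\to C'$ such that $(a,b,c)$ is a morphism of $\mathbb{E}$-triangles. An additive subfunctor $\mathbb{F}\subseteq\mathbb{E}$: subgroups $\mathbb{F}(C,A)\subseteq\mathbb{E}(C,A)$ stable under $a_\star$, $c^\star$. An $\mathbb{F}$-triangle is an $\mathbb{E}$-triangle whose extension lies in $\mathbb{F}$; an $\mathbb{F}$-inflation is the first morphism of an $\mathbb{F}$-triangle. *)

theory Defs
  imports Main
begin

text \<open>Hom-set additions, zeros and negations are indexed by the pair of objects, as are the
  extension groups and the functorial actions, so nothing is assumed about disjointness.\<close>

record ('o, 'm, 'e) ext_data =
  Ob    :: "'o set"
  Hom   :: "'o \<Rightarrow> 'o \<Rightarrow> 'm set"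
  cmp   :: "'m \<Rightarrow> 'm \<Rightarrow> 'm"                 (* cmp g f = g o f *)
  idm   :: "'o \<Rightarrow> 'm"
  madd  :: "'o \<Rightarrow> 'o \<Rightarrow> 'm \<Rightarrow> 'm \<Rightarrow> 'm"
  mzero :: "'o \<Rightarrow> 'o \<Rightarrow> 'm"
  mneg  :: "'o \<Rightarrow> 'o \<Rightarrow> 'm \<Rightarrow> 'm"
  Ext   :: "'o \<Rightarrow> 'o \<Rightarrow> 'e set"              (* Ext C A = E(C,A) *)
  eadd  :: "'o \<Rightarrow> 'o \<Rightarrow> 'e \<Rightarrow> 'e \<Rightarrow> 'e"
  ezero :: "'o \<Rightarrow> 'o \<Rightarrow> 'e"
  eneg  :: "'o \<Rightarrow> 'o \<Rightarrow> 'e \<Rightarrow> 'e"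
  push  :: "'o \<Rightarrow> 'o \<Rightarrow> 'o \<Rightarrow> 'm \<Rightarrow> 'e \<Rightarrow> 'e"
     (* push C A A' a = E(C,a) : E(C,A) \<rightarrow> E(C,A'), i.e. a_star *)
  pull  :: "'o \<Rightarrow> 'o \<Rightarrow> 'o \<Rightarrow> 'm \<Rightarrow> 'e \<Rightarrow> 'e"
     (* pull A C' C c = E(c,A) : E(C,A) \<rightarrow> E(C',A), for c : C' \<rightarrow> C, i.e. c^star *)
  rlz   :: "'o \<Rightarrow> 'o \<Rightarrow> 'e \<Rightarrow> 'o \<Rightarrow> 'm \<Rightarrow> 'm \<Rightarrow> bool"
     (* rlz C A \<delta> B x y : the sequence A -x-> B -y-> C lies in the class s(\<delta>) *)

definition ab_grp :: "'a set \<Rightarrow> ('a \<Rightarrow> 'a \<Rightarrow> 'a) \<Rightarrow> 'a \<Rightarrow> ('a \<Rightarrow> 'a) \<Rightarrow> bool" where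
  "ab_grp S add z neg \<longleftrightarrow>
     z \<in> S \<and> (\<forall>a\<in>S. \<forall>b\<in>S. add a b \<in> S) \<and> (\<forall>a\<in>S. neg a \<in> S) \<and>
     (\<forall>a\<in>S. \<forall>b\<in>S. \<forall>c\<in>S. add (add a b) c = add a (add b c)) \<and>
     (\<forall>a\<in>S. \<forall>b\<in>S. add a b = add b a) \<and>
     (\<forall>a\<in>S. add z a = a) \<and> (\<forall>a\<in>S. add (neg a) a = z)"

definition category :: "('o, 'm, 'e, 'z) ext_data_scheme \<Rightarrow> bool" where
  "category X \<longleftrightarrow>
     (\<forall>A\<in>Ob X. idm X A \<in> Hom X A A) \<and>
     (\<forall>A\<in>Ob X. \<forall>B\<in>Ob X. \<forall>C\<in>Ob X. \<forall>f\<in>Hom X A B. \<forall>g\<in>Hom X B C. cmp X g f \<in> Hom X A C) \<and>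
     (\<forall>A\<in>Ob X. \<forall>B\<in>Ob X. \<forall>f\<in>Hom X A B. cmp X f (idm X A) = f \<and> cmp X (idm X B) f = f) \<and>
     (\<forall>A\<in>Ob X. \<forall>B\<in>Ob X. \<forall>C\<in>Ob X. \<forall>D\<in>Ob X. \<forall>f\<in>Hom X A B. \<forall>g\<in>Hom X B C. \<forall>h\<in>Hom X C D.
        cmp X h (cmp X g f) = cmp X (cmp X h g) f)"

definition preadditive :: "('o, 'm, 'e, 'z) ext_data_scheme \<Rightarrow> bool" where
  "preadditive X \<longleftrightarrow> category X \<and>
     (\<forall>A\<in>Ob X. \<forall>B\<in>Ob X. ab_grp (Hom X A B) (madd X A B) (mzero X A B) (mneg X A B)) \<and>
     (\<forall>A\<in>Ob X. \<forall>B\<in>Ob X. \<forall>C\<in>Ob X. \<forall>f\<in>Hom X A B. \<forall>f'\<in>Hom X A B. \<forall>g\<in>Hom X B C.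
        cmp X g (madd X A B f f') = madd X A C (cmp X g f) (cmp X g f')) \<and>
     (\<forall>A\<in>Ob X. \<forall>B\<in>Ob X. \<forall>C\<in>Ob X. \<forall>f\<in>Hom X A B. \<forall>g\<in>Hom X B C. \<forall>g'\<in>Hom X B C.
        cmp X (madd X B C g g') f = madd X A C (cmp X g f) (cmp X g' f))"

definition is_biproduct :: "('o, 'm, 'e, 'z) ext_data_scheme \<Rightarrow> 'o \<Rightarrow> 'o \<Rightarrow> 'o \<Rightarrow> 'm \<Rightarrow> 'm \<Rightarrow> 'm \<Rightarrow> 'm \<Rightarrow> bool" where
  "is_biproduct X A1 A2 S i1 i2 p1 p2 \<longleftrightarrow>
     S \<in> Ob X \<and> i1 \<in> Hom X A1 S \<and> i2 \<in> Hom X A2 S \<and> p1 \<in> Hom X S A1 \<and> p2 \<in> Hom X S A2 \<and>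
     cmp X p1 i1 = idm X A1 \<and> cmp X p2 i2 = idm X A2 \<and>
     cmp X p2 i1 = mzero X A1 A2 \<and> cmp X p1 i2 = mzero X A2 A1 \<and>
     madd X S S (cmp X i1 p1) (cmp X i2 p2) = idm X S"

definition additive_cat :: "('o, 'm, 'e, 'z) ext_data_scheme \<Rightarrow> bool" where
  "additive_cat X \<longleftrightarrow> preadditive X \<and>
     (\<exists>Z\<in>Ob X. \<forall>A\<in>Ob X. (\<exists>!f. f \<in> Hom X Z A) \<and> (\<exists>!f. f \<in> Hom X A Z)) \<and>
     (\<forall>A1\<in>Ob X. \<forall>A2\<in>Ob X. \<exists>S i1 i2 p1 p2. is_biproduct X A1 A2 S i1 i2 p1 p2)"

definition iso :: "('o, 'm, 'e, 'z) ext_data_scheme \<Rightarrow> 'm \<Rightarrow> 'o \<Rightarrow> 'o \<Rightarrow> bool" where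
  "iso X f A B \<longleftrightarrow> f \<in> Hom X A B \<and> (\<exists>g\<in>Hom X B A. cmp X g f = idm X A \<and> cmp X f g = idm X B)"

definition ET1 :: "('o, 'm, 'e, 'z) ext_data_scheme \<Rightarrow> bool" where
  "ET1 X \<longleftrightarrow> additive_cat X \<and>
     (\<forall>C\<in>Ob X. \<forall>A\<in>Ob X. ab_grp (Ext X C A) (eadd X C A) (ezero X C A) (eneg X C A)) \<and>
     \<comment> \<open>E(C,-) covariant, group homomorphisms\<close>
     (\<forall>C\<in>Ob X. \<forall>A\<in>Ob X. \<forall>A'\<in>Ob X. \<forall>a\<in>Hom X A A'. \<forall>d\<in>Ext X C A.
        push X C A A' a d \<in> Ext X C A') \<and>
     (\<forall>C\<in>Ob X. \<forall>A\<in>Ob X. \<forall>A'\<in>Ob X. \<forall>a\<in>Hom X A A'. \<forall>d\<in>Ext X C A. \<forall>d'\<in>Ext X C A.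
        push X C A A' a (eadd X C A d d') = eadd X C A' (push X C A A' a d) (push X C A A' a d')) \<and>
     (\<forall>C\<in>Ob X. \<forall>A\<in>Ob X. \<forall>d\<in>Ext X C A. push X C A A (idm X A) d = d) \<and>
     (\<forall>C\<in>Ob X. \<forall>A\<in>Ob X. \<forall>A'\<in>Ob X. \<forall>A''\<in>Ob X. \<forall>a\<in>Hom X A A'. \<forall>a'\<in>Hom X A' A''. \<forall>d\<in>Ext X C A.
        push X C A A'' (cmp X a' a) d = push X C A' A'' a' (push X C A A' a d)) \<and>
     \<comment> \<open>E(-,A) contravariant, group homomorphisms\<close>
     (\<forall>A\<in>Ob X. \<forall>C\<in>Ob X. \<forall>C'\<in>Ob X. \<forall>c\<in>Hom X C' C. \<forall>d\<in>Ext X C A.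
        pull X A C' C c d \<in> Ext X C' A) \<and>
     (\<forall>A\<in>Ob X. \<forall>C\<in>Ob X. \<forall>C'\<in>Ob X. \<forall>c\<in>Hom X C' C. \<forall>d\<in>Ext X C A. \<forall>d'\<in>Ext X C A.
        pull X A C' C c (eadd X C A d d') = eadd X C' A (pull X A C' C c d) (pull X A C' C c d')) \<and>
     (\<forall>A\<in>Ob X. \<forall>C\<in>Ob X. \<forall>d\<in>Ext X C A. pull X A C C (idm X C) d = d) \<and>
     (\<forall>A\<in>Ob X. \<forall>C\<in>Ob X. \<forall>C'\<in>Ob X. \<forall>C''\<in>Ob X. \<forall>c\<in>Hom X C' C. \<forall>c'\<in>Hom X C'' C'. \<forall>d\<in>Ext X C A.
        pull X A C'' C (cmp X c c') d = pull X A C'' C' c' (pull X A C' C c d)) \<and>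
     \<comment> \<open>bifunctoriality\<close>
     (\<forall>A\<in>Ob X. \<forall>A'\<in>Ob X. \<forall>C\<in>Ob X. \<forall>C'\<in>Ob X. \<forall>a\<in>Hom X A A'. \<forall>c\<in>Hom X C' C. \<forall>d\<in>Ext X C A.
        pull X A' C' C c (push X C A A' a d) = push X C' A A' a (pull X A C' C c d)) \<and>
     \<comment> \<open>additivity in the morphism variables\<close>
     (\<forall>C\<in>Ob X. \<forall>A\<in>Ob X. \<forall>A'\<in>Ob X. \<forall>a\<in>Hom X A A'. \<forall>a'\<in>Hom X A A'. \<forall>d\<in>Ext X C A.
        push X C A A' (madd X A A' a a') d = eadd X C A' (push X C A A' a d) (push X C A A' a' d)) \<and>
     (\<forall>A\<in>Ob X. \<forall>C\<in>Ob X. \<forall>C'\<in>Ob X. \<forall>c\<in>Hom X C' C. \<forall>c'\<in>Hom X C' C. \<forall>d\<in>Ext X C A.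
        pull X A C' C (madd X C' C c c') d = eadd X C' A (pull X A C' C c d) (pull X A C' C c' d))"

definition ET2 :: "('o, 'm, 'e, 'z) ext_data_scheme \<Rightarrow> bool" where
  "ET2 X \<longleftrightarrow>
     \<comment> \<open>rlz only relates extensions to sequences A \<rightarrow> B \<rightarrow> C\<close>
     (\<forall>C A d B x y. rlz X C A d B x y \<longrightarrow>
        C \<in> Ob X \<and> A \<in> Ob X \<and> d \<in> Ext X C A \<and> B \<in> Ob X \<and> x \<in> Hom X A B \<and> y \<in> Hom X B C) \<and>
     \<comment> \<open>each extension is assigned a (nonempty) equivalence class of sequences\<close>
     (\<forall>C\<in>Ob X. \<forall>A\<in>Ob X. \<forall>d\<in>Ext X C A. \<exists>B x y. rlz X C A d B x y) \<and>
     (\<forall>C A d B x y B' x' y'. rlz X C A d B x y \<longrightarrow>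
        (rlz X C A d B' x' y' \<longleftrightarrow>
           B' \<in> Ob X \<and> x' \<in> Hom X A B' \<and> y' \<in> Hom X B' C \<and>
           (\<exists>b. iso X b B B' \<and> cmp X b x = x' \<and> cmp X y' b = y))) \<and>
     \<comment> \<open>realization condition for morphisms of extensions\<close>
     (\<forall>C A d B x y C' A' d' B' x' y' a c.
        rlz X C A d B x y \<longrightarrow> rlz X C' A' d' B' x' y' \<longrightarrow>
        a \<in> Hom X A A' \<longrightarrow> c \<in> Hom X C C' \<longrightarrow>
        push X C A A' a d = pull X A' C C' c d' \<longrightarrow>
        (\<exists>b\<in>Hom X B B'. cmp X b x = cmp X x' a \<and> cmp X c y = cmp X y' b)) \<and>
     \<comment> \<open>additivity (i): 0 is realized by split sequences A \<rightarrow> A \<oplus> C \<rightarrow> C\<close>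
     (\<forall>C\<in>Ob X. \<forall>A\<in>Ob X. \<forall>S i1 i2 p1 p2. is_biproduct X A C S i1 i2 p1 p2 \<longrightarrow>
        rlz X C A (ezero X C A) S i1 p2) \<and>
     \<comment> \<open>additivity (ii): realization of d \<oplus> d' is the direct sum of realizations\<close>
     (\<forall>C A d B x y C' A' d' B' x' y' SA iA iA' pA pA' SB iB iB' pB pB' SC iC iC' pC pC'.
        rlz X C A d B x y \<longrightarrow> rlz X C' A' d' B' x' y' \<longrightarrow>
        is_biproduct X A A' SA iA iA' pA pA' \<longrightarrow>
        is_biproduct X B B' SB iB iB' pB pB' \<longrightarrow>
        is_biproduct X C C' SC iC iC' pC pC' \<longrightarrow>
        rlz X SC SA
          (eadd X SC SA (push X SC A SA iA (pull X A SC C pC d))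
                        (push X SC A' SA iA' (pull X A' SC C' pC' d')))
          SB
          (madd X SA SB (cmp X iB (cmp X x pA)) (cmp X iB' (cmp X x' pA')))
          (madd X SB SC (cmp X iC (cmp X y pB)) (cmp X iC' (cmp X y' pB'))))"

definition E_triangle :: "('o, 'm, 'e, 'z) ext_data_scheme \<Rightarrow> 'o \<Rightarrow> 'o \<Rightarrow> 'o \<Rightarrow> 'm \<Rightarrow> 'm \<Rightarrow> 'e \<Rightarrow> bool" where
  "E_triangle X A B C x y d \<longleftrightarrow> A \<in> Ob X \<and> C \<in> Ob X \<and> d \<in> Ext X C A \<and> rlz X C A d B x y"

definition ET3 :: "('o, 'm, 'e, 'z) ext_data_scheme \<Rightarrow> bool" where
  "ET3 X \<longleftrightarrow>
     (\<forall>A B C x y d A' B' C' x' y' d' a b.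
        E_triangle X A B C x y d \<longrightarrow> E_triangle X A' B' C' x' y' d' \<longrightarrow>
        a \<in> Hom X A A' \<longrightarrow> b \<in> Hom X B B' \<longrightarrow> cmp X b x = cmp X x' a \<longrightarrow>
        (\<exists>c\<in>Hom X C C'. cmp X c y = cmp X y' b \<and> push X C A A' a d = pull X A' C C' c d'))"

definition additive_subfunctor :: "('o, 'm, 'e, 'z) ext_data_scheme \<Rightarrow> ('o \<Rightarrow> 'o \<Rightarrow> 'e set) \<Rightarrow> bool" where
  "additive_subfunctor X F \<longleftrightarrow>
     (\<forall>C\<in>Ob X. \<forall>A\<in>Ob X. F C A \<subseteq> Ext X C A \<and> ezero X C A \<in> F C A \<and>
        (\<forall>d\<in>F C A. \<forall>d'\<in>F C A. eadd X C A d d' \<in> F C A) \<and> (\<forall>d\<in>F C A. eneg X C A d \<in> F C A)) \<and>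
     (\<forall>C\<in>Ob X. \<forall>A\<in>Ob X. \<forall>A'\<in>Ob X. \<forall>a\<in>Hom X A A'. \<forall>d\<in>F C A. push X C A A' a d \<in> F C A') \<and>
     (\<forall>A\<in>Ob X. \<forall>C\<in>Ob X. \<forall>C'\<in>Ob X. \<forall>c\<in>Hom X C' C. \<forall>d\<in>F C A. pull X A C' C c d \<in> F C' A)"

definition E_inflation :: "('o, 'm, 'e, 'z) ext_data_scheme \<Rightarrow> 'o \<Rightarrow> 'o \<Rightarrow> 'm \<Rightarrow> bool" where
  "E_inflation X A B x \<longleftrightarrow> (\<exists>C y d. E_triangle X A B C x y d)"

definition F_inflation :: "('o, 'm, 'e, 'z) ext_data_scheme \<Rightarrow> ('o \<Rightarrow> 'o \<Rightarrow> 'e set) \<Rightarrow> 'o \<Rightarrow> 'o \<Rightarrow> 'm \<Rightarrow> bool" where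
  "F_inflation X F A B x \<longleftrightarrow> (\<exists>C y d. E_triangle X A B C x y d \<and> d \<in> F C A)"

end

theory Submission
  imports Defs
begin

text \<open>Let A --g--> Y --> C' realize \<delta>' and A --x--> B --> C realize \<delta> \<in> F(C, A).
  Since h g = x = x 1_A, (ET3) completes (1_A, h) to a morphism of E-triangles (1_A, h, c),
  whence \<delta>' = (1_A)_* \<delta>' = c^* \<delta>, which lies in F.\<close>

lemma ET2_rlz_welltyped:
  assumes "ET2 X" and "rlz X C A d B x y"
  shows "C \<in> Ob X" "A \<in> Ob X" "d \<in> Ext X C A" "B \<in> Ob X" "x \<in> Hom X A B" "y \<in> Hom X B C"
  using conjunct1[OF assms(1)[unfolded ET2_def], rule_format, OF assms(2)] by auto

lemma ET1_category:
  assumes "ET1 X"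
  shows "category X"
  using assms unfolding ET1_def additive_cat_def preadditive_def by (elim conjE)

lemma ET1_push_idm:
  assumes "ET1 X" and "C \<in> Ob X" and "A \<in> Ob X" and "d \<in> Ext X C A"
  shows "push X C A A (idm X A) d = d"
proof -
  have "\<forall>C\<in>Ob X. \<forall>A\<in>Ob X. \<forall>d\<in>Ext X C A. push X C A A (idm X A) d = d"
    using assms(1) unfolding ET1_def by (elim conjE) assumption
  with assms(2-4) show ?thesis by blast
qed

lemma category_idm_in_Hom:
  assumes "category X" and "A \<in> Ob X"
  shows "idm X A \<in> Hom X A A"
  using assms unfolding category_def by blast

lemma category_cmp_idm_right:
  assumes "category X" and "A \<in> Ob X" and "B \<in> Ob X" and "f \<in> Hom X A B"
  shows "cmp X f (idm X A) = f"
  using assms unfolding category_def by blast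

lemma additive_subfunctor_pull_closed:
  assumes "additive_subfunctor X F" and "A \<in> Ob X" and "C \<in> Ob X" and "C' \<in> Ob X"
    and "c \<in> Hom X C' C" and "d \<in> F C A"
  shows "pull X A C' C c d \<in> F C' A"
  using assms unfolding additive_subfunctor_def by blast

lemma E_triangle_ext_is_pull_of_factor:
  assumes ET1: "ET1 X" and ET2: "ET2 X" and ET3: "ET3 X"
    and T: "E_triangle X A B C x y d" and T': "E_triangle X A Y C' g y' d'"
    and h: "h \<in> Hom X Y B" and x: "x = cmp X h g"
  shows "\<exists>c\<in>Hom X C' C. d' = pull X A C' C c d"
proof -
  have r: "rlz X C A d B x y" and r': "rlz X C' A d' Y g y'"
    using T T' unfolding E_triangle_def by auto
  note typing = ET2_rlz_welltyped[OF ET2 r] ET2_rlz_welltyped[OF ET2 r']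
  have cat: "category X" using ET1_category[OF ET1] .
  have idA: "idm X A \<in> Hom X A A" using category_idm_in_Hom[OF cat] typing by blast
  have "cmp X h g = cmp X x (idm X A)"
    using category_cmp_idm_right[OF cat] typing x by simp
  then obtain c where c: "c \<in> Hom X C' C"
    and ext: "push X C' A A (idm X A) d' = pull X A C' C c d"
    using ET3 T' T idA h unfolding ET3_def by blast
  have "push X C' A A (idm X A) d' = d'" using ET1_push_idm[OF ET1] typing by blast
  with c ext show ?thesis by auto
qed

theorem lemma3p11:
  fixes X :: "('o, 'm, 'e, 'z) ext_data_scheme"
    and F :: "'o \<Rightarrow> 'o \<Rightarrow> 'e set"
  assumes "ET1 X" and "ET2 X" and "ET3 X"
    and "additive_subfunctor X F"
    and "F_inflation X F A B x"
    and "E_inflation X A Y g"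
    and "h \<in> Hom X Y B"
    and "x = cmp X h g"
  shows "F_inflation X F A Y g"
proof -
  obtain C y d where T: "E_triangle X A B C x y d" and dF: "d \<in> F C A"
    using assms(5) unfolding F_inflation_def by blast
  obtain C' y' d' where T': "E_triangle X A Y C' g y' d'"
    using assms(6) unfolding E_inflation_def by blast
  obtain c where c: "c \<in> Hom X C' C" and d': "d' = pull X A C' C c d"
    using E_triangle_ext_is_pull_of_factor[OF assms(1-3) T T' assms(7,8)] by blast
  have "C \<in> Ob X" and "C' \<in> Ob X" and "A \<in> Ob X"
    using T T' ET2_rlz_welltyped(1,2)[OF assms(2)] unfolding E_triangle_def by blast+
  then have "d' \<in> F C' A"
    using additive_subfunctor_pull_closed[OF assms(4) _ _ _ c dF] d' by blast
  with T' show ?thesis unfolding F_inflation_def by blast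
qed

end
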